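(* Let $G\in\mathcal{D}_n$ and let $\varphi_1,\varphi_2$ be two $\mathbb{T}$-gains on $G$. Then $\sigma(A(\Phi_1))=\sigma(A(\Phi_2))$ if and only if $\Re(\varphi_1(C))=\Re(\varphi_2(C))$ for all cycles $C$ of $G$, where $\Phi_j=(G,\varphi_j)$.
   Context: Graphs are finite, simple and undirected. $\mathcal{D}_n$ is the collection of all connected graphs $G$ on $n$ vertices such that for each $k$ with $3\le k\le n$, $G$ has at most one cycle of length $k$. $\mathbb{T}=\{z\in\mathbb{C}:|z|=1\}$. A $\mathbb{T}$-gain on $G$ is a map $\varphi$ from oriented edges to $\mathbb{T}$ with $\varphi(\overrightarrow{e_{ts}})=\varphi(\overrightarrow{e_{st}})^{-1}$; $A(\Phi)$ for $\Phi=(G,\varphi)$ is the Hermitian matrix with $(s,t)$ entry $\varphi(\overrightarrow{e_{st}})$ if $v_s\sim v_t$, else $0$; $\sigma(\cdot)$ denotes the spectrum. The gain $\varphi(\overrightarrow{C})$ of a directed cycle is the product of the gains of its oriented edges; the two directions of a cycle $C$ give conjugate gains, and $\Re(\varphi(C))$ denotes their common real part. *)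

theory Defs
  imports "Jordan_Normal_Form.Matrix" "Jordan_Normal_Form.Char_Poly"
    "HOL-Computational_Algebra.Fundamental_Theorem_Algebra"
begin

definition simple_graph :: "nat \<Rightarrow> (nat \<Rightarrow> nat \<Rightarrow> bool) \<Rightarrow> bool" where
  "simple_graph n E \<longleftrightarrow> (\<forall>x y. E x y \<longrightarrow> x < n \<and> y < n \<and> x \<noteq> y \<and> E y x)"

definition connected_graph :: "nat \<Rightarrow> (nat \<Rightarrow> nat \<Rightarrow> bool) \<Rightarrow> bool" where
  "connected_graph n E \<longleftrightarrow> simple_graph n E \<and> (\<forall>u<n. \<forall>v<n. E\<^sup>*\<^sup>* u v)"

text \<open>A cycle, traversed in a fixed direction from a fixed start vertex,
  given by its list of (distinct) vertices v_0, ..., v_{k-1}, k \<ge> 3.\<close>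
definition is_cycle :: "nat \<Rightarrow> (nat \<Rightarrow> nat \<Rightarrow> bool) \<Rightarrow> nat list \<Rightarrow> bool" where
  "is_cycle n E vs \<longleftrightarrow> length vs \<ge> 3 \<and> distinct vs \<and> set vs \<subseteq> {0..<n} \<and>
     (\<forall>i < length vs. E (vs ! i) (vs ! ((i + 1) mod length vs)))"

definition cycle_edges :: "nat list \<Rightarrow> nat set set" where
  "cycle_edges vs = {{vs ! i, vs ! ((i + 1) mod length vs)} | i. i < length vs}"

text \<open>The class D_n: connected graphs on n vertices having, for every length k,
  at most one cycle (as a subgraph) of length k.\<close>
definition in_D :: "nat \<Rightarrow> (nat \<Rightarrow> nat \<Rightarrow> bool) \<Rightarrow> bool" where
  "in_D n E \<longleftrightarrow> connected_graph n E \<and>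
     (\<forall>xs ys. is_cycle n E xs \<and> is_cycle n E ys \<and> length xs = length ys
        \<longrightarrow> cycle_edges xs = cycle_edges ys)"

text \<open>A T-gain: phi s t is the gain of the oriented edge from v_s to v_t.\<close>
definition T_gain :: "(nat \<Rightarrow> nat \<Rightarrow> bool) \<Rightarrow> (nat \<Rightarrow> nat \<Rightarrow> complex) \<Rightarrow> bool" where
  "T_gain E \<phi> \<longleftrightarrow> (\<forall>s t. E s t \<longrightarrow> cmod (\<phi> s t) = 1 \<and> \<phi> t s = inverse (\<phi> s t))"

definition gain_adj :: "nat \<Rightarrow> (nat \<Rightarrow> nat \<Rightarrow> bool) \<Rightarrow> (nat \<Rightarrow> nat \<Rightarrow> complex) \<Rightarrow> complex mat" where
  "gain_adj n E \<phi> = mat n n (\<lambda>(s, t). if E s t then \<phi> s t else 0)"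

definition cycle_gain :: "(nat \<Rightarrow> nat \<Rightarrow> complex) \<Rightarrow> nat list \<Rightarrow> complex" where
  "cycle_gain \<phi> vs = (\<Prod>i<length vs. \<phi> (vs ! i) (vs ! ((i + 1) mod length vs)))"

definition spec :: "complex mat \<Rightarrow> complex multiset" where
  "spec A = proots (char_poly A)"

end

(*
  The coefficient of x^(n-k) in the characteristic polynomial of A(Phi) is (-1)^k times the sum
  of sign(p) w(p) over the permutations p moving exactly k vertices, where w(p) is the product of
  the entries A(v, p v) over the moved vertices v. This weight factors over the cycles of p: a
  cycle leaving the edges of G contributes 0, a 2-cycle contributes 1, and a longer cycle
  contributes the gain of a cycle of G. If two gains give all cycles the same real part, the cycle
  weights of every p under the two gains are equal or conjugate, and reversing the cycles of p on
  which they differ is an involution preserving sign and support that carries one weight to the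
  other; so all coefficients agree. Conversely, induct on the length k of a cycle C: in the
  coefficient of x^(n-k) the same involution pairs off all terms except those of the two
  orientations of C (a graph in D_n has no other cycle of length k), which contribute
  2 sign(C) Re(phi(C)).
*)

theory Submission
  imports Defs "HOL-Combinatorics.Cycles" "HOL-Combinatorics.Orbits"
begin

(* Plain inv is taken by the structure syntax of HOL-Algebra, which Defs imports. *)
abbreviation perm_inv :: "('a \<Rightarrow> 'a) \<Rightarrow> 'a \<Rightarrow> 'a" where
  "perm_inv p \<equiv> Hilbert_Choice.inv p"

definition moved :: "('a \<Rightarrow> 'a) \<Rightarrow> 'a set" where
  "moved p = {i. p i \<noteq> i}"

lemma moved_subset: "p permutes S \<Longrightarrow> moved p \<subseteq> S"
  unfolding moved_def using permutes_not_in by fastforce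

lemma finite_moved: "permutation p \<Longrightarrow> finite (moved p)"
  by (simp add: permutation moved_def)

lemma moved_inv: "permutation p \<Longrightarrow> moved (perm_inv p) = moved p"
  unfolding moved_def
  by (metis (no_types, opaque_lifting) bij_inv_eq_iff permutation_bijective)

lemma permutes_if_moved_subset:
  assumes "permutation p" "moved p \<subseteq> S"
  shows "p permutes S"
  using assms permutation_bijective[OF assms(1)]
  unfolding permutes_def moved_def by (auto simp: bij_iff)

lemma apply_in_moved_iff: "permutation p \<Longrightarrow> p j \<in> moved p \<longleftrightarrow> j \<in> moved p"
  unfolding moved_def using bij_is_inj[OF permutation_bijective] by (auto dest: injD)

lemma orbit_eq_if_in_orbit: "permutation p \<Longrightarrow> j \<in> orbit p i \<Longrightarrow> orbit p j = orbit p i"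
  by (meson cyclic_on_orbit' orbit_cyclic_eq3)

lemma apply_in_orbit_iff:
  assumes "permutation p"
  shows "p j \<in> orbit p i \<longleftrightarrow> j \<in> orbit p i"
proof
  assume "p j \<in> orbit p i"
  then have "orbit p j = orbit p i"
    using orbit_eq_if_in_orbit[OF assms] permutation_orbit_step[OF assms] by metis
  then show "j \<in> orbit p i" using permutation_self_in_orbit[OF assms] by blast
qed (rule orbit.step)

lemma orbit_subset_invariant:
  assumes "\<And>j. j \<in> U \<Longrightarrow> p j \<in> U" "i \<in> U"
  shows "orbit p i \<subseteq> U"
proof
  fix j assume "j \<in> orbit p i"
  then show "j \<in> U" by (induction rule: orbit.induct) (use assms in auto)
qed

lemma invariant_image_eq:
  assumes "bij p" "\<And>j. p j \<in> U \<longleftrightarrow> j \<in> U"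
  shows "p ` U = U"
proof
  show "U \<subseteq> p ` U"
  proof
    fix j assume "j \<in> U"
    moreover have "p (perm_inv p j) = j" using assms(1) by (simp add: bij_is_surj surj_f_inv_f)
    ultimately show "j \<in> p ` U" using assms(2)[of "perm_inv p j"] by (metis image_eqI)
  qed
qed (use assms in auto)

lemma prod_eq_by_orbits:
  assumes p: "permutation p" and V: "finite V" "\<And>j. p j \<in> V \<longleftrightarrow> j \<in> V"
    and eq: "\<And>i. i \<in> V \<Longrightarrow> prod f (orbit p i) = prod g (orbit p i)"
  shows "prod f V = prod g V"
proof -
  have sub: "orbit p i \<subseteq> V" if "i \<in> V" for i
    by (rule orbit_subset_invariant[OF _ that]) (simp add: V(2))
  have V_orbits: "V = \<Union> (orbit p ` V)"
  proof
    show "V \<subseteq> \<Union> (orbit p ` V)" using permutation_self_in_orbit[OF p] by fast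
  qed (use sub in fast)
  have fin: "\<forall>A\<in>orbit p ` V. finite A"
    by (simp add: finite_orbit permutation_self_in_orbit[OF p])
  have disj: "\<forall>A\<in>orbit p ` V. \<forall>B\<in>orbit p ` V. A \<noteq> B \<longrightarrow> A \<inter> B = {}"
    using orbit_eq_if_in_orbit[OF p] by blast
  have "prod f V = (\<Prod>A\<in>orbit p ` V. prod f A)"
    by (subst V_orbits) (simp add: prod.Union_disjoint[OF fin disj])
  also have "\<dots> = (\<Prod>A\<in>orbit p ` V. prod g A)"
    by (rule prod.cong[OF refl]) (use eq in auto)
  also have "\<dots> = prod g V"
    by (subst (2) V_orbits) (simp add: prod.Union_disjoint[OF fin disj])
  finally show ?thesis .
qed

lemma two_le_card_orbit:
  assumes "permutation p" "i \<in> moved p"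
  shows "2 \<le> card (orbit p i)"
proof -
  have "{i, p i} \<subseteq> orbit p i" by (simp add: permutation_self_in_orbit[OF assms(1)] orbit.base)
  moreover have "card {i, p i} = 2" using assms(2) by (simp add: moved_def)
  ultimately show ?thesis using card_mono[OF finite_orbit] permutation_self_in_orbit[OF assms(1)] by metis
qed

definition orbit_weight :: "('a \<Rightarrow> 'a \<Rightarrow> complex) \<Rightarrow> ('a \<Rightarrow> 'a) \<Rightarrow> 'a \<Rightarrow> complex" where
  "orbit_weight a p i = (\<Prod>j\<in>orbit p i. a j (p j))"

definition perm_weight :: "('a \<Rightarrow> 'a \<Rightarrow> complex) \<Rightarrow> ('a \<Rightarrow> 'a) \<Rightarrow> complex" where
  "perm_weight a p = (\<Prod>i\<in>moved p. a i (p i))"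

definition hermitian_kernel :: "('a \<Rightarrow> 'a \<Rightarrow> complex) \<Rightarrow> bool" where
  "hermitian_kernel a \<longleftrightarrow> (\<forall>s t. cnj (a s t) = a t s)"

lemma prod_inv_eq_cnj:
  assumes p: "bij p" and a: "hermitian_kernel a" and V: "\<And>j. p j \<in> V \<longleftrightarrow> j \<in> V"
  shows "(\<Prod>j\<in>V. a j (perm_inv p j)) = cnj (\<Prod>j\<in>V. a j (p j))"
proof -
  have "inj_on p V" using bij_is_inj[OF p] by (rule inj_on_subset) simp
  then have "bij_betw p V V" using invariant_image_eq[OF p V] by (simp add: bij_betw_def)
  then have "(\<Prod>j\<in>V. a j (perm_inv p j)) = (\<Prod>j\<in>V. a (p j) (perm_inv p (p j)))"
    by (rule prod.reindex_bij_betw[symmetric])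
  also have "\<dots> = (\<Prod>j\<in>V. cnj (a j (p j)))"
    using p a by (simp add: bij_is_inj hermitian_kernel_def)
  finally show ?thesis by (simp add: cnj_prod)
qed

lemma perm_weight_inv:
  assumes "permutation p" "hermitian_kernel a"
  shows "perm_weight a (perm_inv p) = cnj (perm_weight a p)"
  unfolding perm_weight_def moved_inv[OF assms(1)]
  using prod_inv_eq_cnj[OF permutation_bijective assms(2) apply_in_moved_iff] assms(1) by simp

lemma perm_weight_eq_by_orbits:
  assumes "permutation p" "moved q = moved p" "\<And>i. i \<in> moved p \<Longrightarrow> orbit q i = orbit p i"
    and "\<And>i. i \<in> moved p \<Longrightarrow> orbit_weight b q i = orbit_weight a p i"
  shows "perm_weight b q = perm_weight a p"
  unfolding perm_weight_def assms(2)
  by (rule prod_eq_by_orbits[OF assms(1) finite_moved[OF assms(1)] apply_in_moved_iff[OF assms(1)]])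
    (use assms(3,4) in \<open>simp add: orbit_weight_def\<close>)

lemma sign_perm_weight_add_inv:
  assumes "permutation s" "hermitian_kernel a"
  shows "of_int (sign s) * perm_weight a s + of_int (sign (perm_inv s)) * perm_weight a (perm_inv s) =
    of_int (sign s) * of_real (2 * Re (perm_weight a s))"
  using perm_weight_inv[OF assms] sign_inverse[OF assms(1)]
  by (simp add: distrib_left[symmetric] complex_add_cnj)

section \<open>Reversing the cycles in an invariant set\<close>

definition reverse_on :: "'a set \<Rightarrow> ('a \<Rightarrow> 'a) \<Rightarrow> 'a \<Rightarrow> 'a" where
  "reverse_on U p i = (if i \<in> U then perm_inv p i else p i)"

context
  fixes p :: "'a \<Rightarrow> 'a" and U :: "'a set"
  assumes perm: "permutation p" and invariant: "\<And>j. p j \<in> U \<longleftrightarrow> j \<in> U"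
begin

private lemma bij_p: "bij p"
  using permutation_bijective[OF perm] .

private lemma inv_cancel [simp]: "p (perm_inv p j) = j" "perm_inv p (p j) = j"
  using bij_p by (simp_all add: bij_is_surj surj_f_inv_f bij_is_inj)

private lemma inv_invariant: "perm_inv p j \<in> U \<longleftrightarrow> j \<in> U"
  using invariant[of "perm_inv p j"] by simp

lemma reverse_on_eq_comp:
  defines "q \<equiv> \<lambda>i. if i \<in> U then perm_inv p i else i"
  shows "permutation q" "reverse_on U p = q \<circ> q \<circ> p"
proof -
  let ?q' = "\<lambda>i. if i \<in> U then p i else i"
  have "q \<circ> ?q' = id" "?q' \<circ> q = id"
    by (auto simp: q_def invariant inv_invariant)
  then have "bij q" using o_bij by blast
  moreover have "{x. q x \<noteq> x} \<subseteq> moved p"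
    by (auto simp: q_def moved_def) (metis inv_cancel(2))
  ultimately show "permutation q"
    using finite_moved[OF perm] by (simp add: permutation finite_subset)
  show "reverse_on U p = q \<circ> q \<circ> p"
    by (auto simp: reverse_on_def q_def invariant)
qed

lemma permutation_reverse_on: "permutation (reverse_on U p)"
  using reverse_on_eq_comp perm by (simp add: permutation_compose)

lemma sign_reverse_on: "sign (reverse_on U p) = sign p"
proof -
  obtain q where q: "permutation q" "reverse_on U p = q \<circ> q \<circ> p"
    using reverse_on_eq_comp by blast
  then have "sign (reverse_on U p) = sign q * sign q * sign p"
    using perm by (simp add: sign_compose permutation_compose)
  then show ?thesis by (simp add: sign_def)
qed

lemma moved_reverse_on: "moved (reverse_on U p) = moved p"
  unfolding moved_def reverse_on_def by (metis inv_cancel)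

lemma reverse_on_permutes: "p permutes S \<Longrightarrow> reverse_on U p permutes S"
  using permutes_if_moved_subset[OF permutation_reverse_on] moved_reverse_on moved_subset
  by metis

private lemma orbit_invariant: "j \<in> orbit p i \<Longrightarrow> j \<in> U \<longleftrightarrow> i \<in> U"
  by (induction rule: orbit.induct) (simp_all add: invariant)

private lemma reverse_on_in_orbit:
  "j \<in> orbit p i \<Longrightarrow> reverse_on U p j = (if i \<in> U then perm_inv p j else p j)"
  using orbit_invariant by (simp add: reverse_on_def)

lemma orbit_reverse_on: "orbit (reverse_on U p) i = orbit p i"
proof (cases "i \<in> U")
  case True
  have "orbit (reverse_on U p) i = orbit (perm_inv p) i"
    using True reverse_on_in_orbit
    by (intro orbit_cong) (simp_all add: orbit_inv_eq perm permutation_self_in_orbit permutation_inverse)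
  then show ?thesis using orbit_inv_eq[OF perm] by simp
next
  case False
  then show ?thesis
    using reverse_on_in_orbit by (intro orbit_cong) (simp_all add: perm permutation_self_in_orbit)
qed

lemma reverse_on_reverse_on: "reverse_on U (reverse_on U p) = p"
proof
  fix i
  show "reverse_on U (reverse_on U p) i = p i"
  proof (cases "i \<in> U")
    case True
    then have "reverse_on U p (p i) = i" by (simp add: reverse_on_def invariant)
    then have "perm_inv (reverse_on U p) i = p i"
      using permutation_reverse_on by (simp add: inv_f_eq bij_is_inj permutation_bijective)
    then show ?thesis using True by (simp add: reverse_on_def)
  qed (simp add: reverse_on_def)
qed

lemma orbit_weight_reverse_on:
  assumes "hermitian_kernel a"
  shows "orbit_weight a (reverse_on U p) i =
    (if i \<in> U then cnj (orbit_weight a p i) else orbit_weight a p i)"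
proof -
  have "orbit_weight a (reverse_on U p) i =
      (if i \<in> U then \<Prod>j\<in>orbit p i. a j (perm_inv p j) else orbit_weight a p i)"
    unfolding orbit_weight_def orbit_reverse_on using reverse_on_in_orbit by simp
  also have "(\<Prod>j\<in>orbit p i. a j (perm_inv p j)) = cnj (orbit_weight a p i)"
    unfolding orbit_weight_def
    by (rule prod_inv_eq_cnj[OF bij_p assms apply_in_orbit_iff[OF perm]])
  finally show ?thesis .
qed

end

lemma orbit_weight_apply: "permutation p \<Longrightarrow> orbit_weight a p (p j) = orbit_weight a p j"
  by (simp add: orbit_weight_def permutation_orbit_step)

definition mismatch ::
  "('a \<Rightarrow> 'a \<Rightarrow> complex) \<Rightarrow> ('a \<Rightarrow> 'a \<Rightarrow> complex) \<Rightarrow> ('a \<Rightarrow> 'a) \<Rightarrow> 'a set" where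
  "mismatch a b p = {i. orbit_weight b p i \<noteq> orbit_weight a p i}"

definition switch ::
  "('a \<Rightarrow> 'a \<Rightarrow> complex) \<Rightarrow> ('a \<Rightarrow> 'a \<Rightarrow> complex) \<Rightarrow> ('a \<Rightarrow> 'a) \<Rightarrow> 'a \<Rightarrow> 'a" where
  "switch a b p = reverse_on (mismatch a b p) p"

definition orbit_weights_conj ::
  "('a \<Rightarrow> 'a \<Rightarrow> complex) \<Rightarrow> ('a \<Rightarrow> 'a \<Rightarrow> complex) \<Rightarrow> ('a \<Rightarrow> 'a) \<Rightarrow> bool" where
  "orbit_weights_conj a b p \<longleftrightarrow> (\<forall>i\<in>moved p.
     orbit_weight b p i = orbit_weight a p i \<or> orbit_weight b p i = cnj (orbit_weight a p i))"

context
  fixes a b :: "'a \<Rightarrow> 'a \<Rightarrow> complex" and p :: "'a \<Rightarrow> 'a"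
  assumes perm: "permutation p"
begin

lemma mismatch_invariant: "p j \<in> mismatch a b p \<longleftrightarrow> j \<in> mismatch a b p"
  by (simp add: mismatch_def orbit_weight_apply[OF perm])

lemma sign_switch: "sign (switch a b p) = sign p"
  unfolding switch_def by (rule sign_reverse_on[OF perm mismatch_invariant])

lemma moved_switch: "moved (switch a b p) = moved p"
  unfolding switch_def by (rule moved_reverse_on[OF perm mismatch_invariant])

lemma switch_permutes: "p permutes S \<Longrightarrow> switch a b p permutes S"
  unfolding switch_def by (rule reverse_on_permutes[OF perm mismatch_invariant])

lemma orbit_switch: "orbit (switch a b p) i = orbit p i"
  unfolding switch_def by (rule orbit_reverse_on[OF perm mismatch_invariant])

lemma mismatch_switch:
  assumes herm: "hermitian_kernel a" "hermitian_kernel b"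
  shows "mismatch a b (switch a b p) = mismatch a b p"
proof -
  have "orbit_weight b (switch a b p) i \<noteq> orbit_weight a (switch a b p) i \<longleftrightarrow>
      i \<in> mismatch a b p" for i
    unfolding switch_def orbit_weight_reverse_on[OF perm mismatch_invariant herm(1)]
      orbit_weight_reverse_on[OF perm mismatch_invariant herm(2)]
    by (simp add: mismatch_def)
  then show ?thesis by (auto simp: mismatch_def[of a b "switch a b p"])
qed

lemma switch_switch:
  assumes "hermitian_kernel a" "hermitian_kernel b"
  shows "switch a b (switch a b p) = p"
proof -
  have "switch a b (switch a b p) = reverse_on (mismatch a b p) (switch a b p)"
    by (simp only: switch_def[of a b "switch a b p"] mismatch_switch[OF assms])
  also have "\<dots> = p"
    unfolding switch_def by (rule reverse_on_reverse_on[OF perm mismatch_invariant])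
  finally show ?thesis .
qed

lemma perm_weight_switch:
  assumes "hermitian_kernel b" "orbit_weights_conj a b p"
  shows "perm_weight b (switch a b p) = perm_weight a p"
proof (rule perm_weight_eq_by_orbits[OF perm])
  fix i assume i: "i \<in> moved p"
  show "orbit_weight b (switch a b p) i = orbit_weight a p i"
    unfolding switch_def orbit_weight_reverse_on[OF perm mismatch_invariant assms(1)]
    using assms(2) i by (auto simp: mismatch_def orbit_weights_conj_def)
qed (simp_all add: switch_def moved_reverse_on orbit_reverse_on perm mismatch_invariant)

end

lemma sum_sign_perm_weight_switch:
  assumes "hermitian_kernel a" "hermitian_kernel b"
    and "\<And>p. p \<in> Q \<Longrightarrow> permutation p \<and> orbit_weights_conj a b p \<and> switch a b p \<in> Q"
  shows "(\<Sum>p\<in>Q. of_int (sign p) * perm_weight b p) = (\<Sum>p\<in>Q. of_int (sign p) * perm_weight a p)"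
proof -
  have switch: "switch a b (switch a b p) = p" "switch a b p \<in> Q"
    and weight: "of_int (sign (switch a b p)) * perm_weight b (switch a b p) =
      of_int (sign p) * perm_weight a p" if "p \<in> Q" for p
  proof -
    from that have p: "permutation p" "orbit_weights_conj a b p" "switch a b p \<in> Q"
      using assms(3) by auto
    then show "switch a b (switch a b p) = p" "switch a b p \<in> Q"
      "of_int (sign (switch a b p)) * perm_weight b (switch a b p) = of_int (sign p) * perm_weight a p"
      using switch_switch[OF p(1) assms(1,2)] perm_weight_switch[OF p(1) assms(2) p(2)]
        sign_switch[OF p(1)] by simp_all
  qed
  show ?thesis
    by (rule sum.reindex_bij_witness[of Q "switch a b" "switch a b", symmetric])
      (simp_all add: switch weight)
qed

section \<open>Coefficients of the characteristic polynomial\<close>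

lemma prod_char_poly_matrix_perm:
  fixes a :: "nat \<Rightarrow> nat \<Rightarrow> complex"
  assumes p: "p permutes {0..<n}" and diag: "\<And>i. a i i = 0"
  shows "(\<Prod>i = 0..<n. char_poly_matrix (mat n n (\<lambda>(s, t). a s t)) $$ (i, p i)) =
    monom ((-1) ^ card (moved p) * perm_weight a p) (n - card (moved p))"
proof -
  let ?M = "char_poly_matrix (mat n n (\<lambda>(s, t). a s t))"
  have entry: "?M $$ (i, p i) = (if p i = i then [:0, 1:] else [:- a i (p i):])" if "i < n" for i
    using that permutes_in_image[OF p, of i] diag by (auto simp: char_poly_matrix_def)
  have moved_sub: "moved p \<subseteq> {0..<n}" using moved_subset[OF p] .
  have "(\<Prod>i = 0..<n. ?M $$ (i, p i)) =
      (\<Prod>i \<in> {0..<n} - moved p. ?M $$ (i, p i)) * (\<Prod>i \<in> moved p. ?M $$ (i, p i))"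
    using prod.subset_diff[OF moved_sub] by simp
  also have "(\<Prod>i \<in> {0..<n} - moved p. ?M $$ (i, p i)) = (\<Prod>i \<in> {0..<n} - moved p. [:0, 1:])"
  proof (rule prod.cong[OF refl])
    fix i assume "i \<in> {0..<n} - moved p"
    then show "?M $$ (i, p i) = [:0, 1:]" using entry[of i] by (simp add: moved_def)
  qed
  also have "\<dots> = [:0, 1:] ^ (n - card (moved p))"
    using card_Diff_subset[OF finite_subset[OF moved_sub] moved_sub] by simp
  also have "(\<Prod>i \<in> moved p. ?M $$ (i, p i)) = (\<Prod>i \<in> moved p. [:- a i (p i):])"
  proof (rule prod.cong[OF refl])
    fix i assume "i \<in> moved p"
    then show "?M $$ (i, p i) = [:- a i (p i):]" using entry[of i] moved_sub by (auto simp: moved_def)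
  qed
  also have "\<dots> = [:(-1) ^ card (moved p) * perm_weight a p:]"
    by (simp add: prod_to_poly perm_weight_def prod_uminus)
  finally show ?thesis by (simp add: monom_altdef)
qed

definition perms_moving :: "nat \<Rightarrow> nat \<Rightarrow> (nat \<Rightarrow> nat) set" where
  "perms_moving n k = {p. p permutes {0..<n} \<and> card (moved p) = k}"

lemma coeff_char_poly_zero_diag:
  fixes a :: "nat \<Rightarrow> nat \<Rightarrow> complex"
  assumes diag: "\<And>i. a i i = 0" and k: "k \<le> n"
  shows "coeff (char_poly (mat n n (\<lambda>(s, t). a s t))) (n - k) =
    (-1) ^ k * (\<Sum>p\<in>perms_moving n k. of_int (sign p) * perm_weight a p)"
proof -
  let ?P = "{p. p permutes {0..<n}}"
  let ?M = "char_poly_matrix (mat n n (\<lambda>(s, t). a s t))"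
  have of_int_monom: "(of_int z :: complex poly) * monom c m = monom (of_int z * c) m"
    for z c m by (simp add: of_int_poly monom_altdef mult.commute)
  have "char_poly (mat n n (\<lambda>(s, t). a s t)) =
      (\<Sum>p\<in>?P. of_int (sign p) * (\<Prod>i = 0..<n. ?M $$ (i, p i)))"
    unfolding char_poly_def by (rule det_def') (simp add: char_poly_matrix_def)
  also have "\<dots> = (\<Sum>p\<in>?P. monom (of_int (sign p) * ((-1) ^ card (moved p) * perm_weight a p))
      (n - card (moved p)))"
    by (rule sum.cong[OF refl]) (simp add: prod_char_poly_matrix_perm diag of_int_monom)
  finally have "coeff (char_poly (mat n n (\<lambda>(s, t). a s t))) (n - k) =
      (\<Sum>p\<in>?P. if card (moved p) = k then (-1) ^ k * (of_int (sign p) * perm_weight a p) else 0)"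
  proof (simp add: coeff_sum, intro sum.cong refl)
    fix p assume "p \<in> ?P"
    then have "card (moved p) \<le> n"
      using card_mono[OF _ moved_subset, of "{0..<n}" p] by simp
    then show "(if n - card (moved p) = n - k then of_int (sign p) * ((-1) ^ card (moved p) *
        perm_weight a p) else 0) = (if card (moved p) = k then (-1) ^ k * (of_int (sign p) *
        perm_weight a p) else 0)"
      using k by (auto simp: mult_ac)
  qed
  also have "\<dots> = (-1) ^ k * (\<Sum>p\<in>perms_moving n k. of_int (sign p) * perm_weight a p)"
    unfolding sum_distrib_left perms_moving_def
    by (subst sum.inter_filter[OF finite_permutations, symmetric]) simp_all
  finally show ?thesis .
qed

lemma char_poly_eqI:
  assumes "A \<in> carrier_mat n n" "B \<in> carrier_mat n n"
    and "\<And>k. k \<le> n \<Longrightarrow> coeff (char_poly A) (n - k) = coeff (char_poly B) (n - k)"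
  shows "char_poly A = char_poly B"
proof (rule poly_eqI)
  fix j
  show "coeff (char_poly A) j = coeff (char_poly B) j"
  proof (cases "j \<le> n")
    case True
    then show ?thesis using assms(3)[of "n - j"] by simp
  next
    case False
    then show ?thesis
      using degree_monic_char_poly[OF assms(1)] degree_monic_char_poly[OF assms(2)]
      by (simp add: coeff_eq_0)
  qed
qed

lemma spec_eq_iff_char_poly_eq:
  assumes "A \<in> carrier_mat n n" "B \<in> carrier_mat n n"
  shows "spec A = spec B \<longleftrightarrow> char_poly A = char_poly B"
proof
  have decompose: "char_poly M = (\<Prod>x\<in>#spec M. [:- x, 1:])" if "M \<in> carrier_mat n n" for M
    using complex_poly_decompose_multiset[of "char_poly M"] degree_monic_char_poly[OF that]
    unfolding spec_def by simp
  show "spec A = spec B \<Longrightarrow> char_poly A = char_poly B"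
    using decompose[OF assms(1)] decompose[OF assms(2)] by simp
qed (simp add: spec_def)

section \<open>Cycles given as vertex lists\<close>

lemma set_conv_nth_image: "set xs = (!) xs ` {..<length xs}"
  by (auto simp: in_set_conv_nth)

lemma cycle_of_list_funpow_nth:
  assumes "distinct C" "t < length C"
  shows "(cycle_of_list C ^^ m) (C ! t) = C ! ((m + t) mod length C)"
proof -
  have "(cycle_of_list C ^^ m) (C ! t) = map (cycle_of_list C ^^ m) C ! t"
    using assms(2) by simp
  also have "\<dots> = C ! ((m + t) mod length C)"
    using assms by (simp add: cyclic_rotation nth_rotate)
  finally show ?thesis .
qed

lemma cycle_of_list_nth:
  assumes "distinct C" "t < length C"
  shows "cycle_of_list C (C ! t) = C ! ((t + 1) mod length C)"
  using cycle_of_list_funpow_nth[OF assms, of 1] by simp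

lemma prod_cycle_of_list:
  assumes "distinct C"
  shows "(\<Prod>j\<in>set C. f j (cycle_of_list C j)) =
    (\<Prod>t<length C. f (C ! t) (C ! ((t + 1) mod length C)))"
proof -
  have "(\<Prod>j\<in>set C. f j (cycle_of_list C j)) = (\<Prod>t<length C. f (C ! t) (cycle_of_list C (C ! t)))"
    unfolding set_conv_nth_image by (rule prod.reindex[OF inj_on_nth[OF assms], simplified]) simp
  then show ?thesis using cycle_of_list_nth[OF assms] by simp
qed

lemma moved_cycle_of_list:
  assumes "distinct C" "2 \<le> length C"
  shows "moved (cycle_of_list C) = set C"
proof
  show "moved (cycle_of_list C) \<subseteq> set C"
    using id_outside_supp by (fastforce simp: moved_def)
  show "set C \<subseteq> moved (cycle_of_list C)"
  proof
    fix v assume "v \<in> set C"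
    then obtain t where t: "t < length C" "v = C ! t" by (auto simp: in_set_conv_nth)
    have "(t + 1) mod length C \<noteq> t"
    proof (cases "t + 1 < length C")
      case False
      then have "t + 1 = length C" using t(1) by simp
      then show ?thesis using assms(2) by simp
    qed simp
    moreover have "(t + 1) mod length C < length C" by (rule mod_less_divisor) (use t(1) in linarith)
    ultimately have "C ! ((t + 1) mod length C) \<noteq> C ! t"
      using nth_eq_iff_index_eq[OF assms(1)] t(1) by blast
    then show "v \<in> moved (cycle_of_list C)"
      using t cycle_of_list_nth[OF assms(1) t(1)] by (simp add: moved_def)
  qed
qed

lemma orbit_cycle_of_list:
  assumes "distinct C" "v \<in> set C"
  shows "orbit (cycle_of_list C) v = set C"
proof -
  obtain t where t: "t < length C" "v = C ! t" using assms(2) by (auto simp: in_set_conv_nth)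
  have "orbit (cycle_of_list C) v = {C ! ((m + t) mod length C) | m. True}"
    unfolding orbit_altdef_permutation[OF permutation_of_cycle] t(2)
      cycle_of_list_funpow_nth[OF assms(1) t(1)] ..
  also have "\<dots> = set C"
  proof
    have "0 < length C" using t(1) by linarith
    then show "{C ! ((m + t) mod length C) | m. True} \<subseteq> set C" by auto
    show "set C \<subseteq> {C ! ((m + t) mod length C) | m. True}"
    proof
      fix w assume "w \<in> set C"
      then obtain r where "r < length C" "w = C ! r" by (auto simp: in_set_conv_nth)
      then have "w = C ! ((r + length C - t + t) mod length C)" using t(1) by simp
      then show "w \<in> {C ! ((m + t) mod length C) | m. True}" by blast
    qed
  qed
  finally show ?thesis .
qed

lemma cycle_of_list_twice_neq:
  assumes "distinct C" "3 \<le> length C" "v \<in> set C"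
  shows "cycle_of_list C (cycle_of_list C v) \<noteq> v"
proof -
  obtain t where t: "t < length C" "v = C ! t" using assms(3) by (auto simp: in_set_conv_nth)
  have "(2 + t) mod length C \<noteq> t mod length C"
  proof
    assume "(2 + t) mod length C = t mod length C"
    then have "length C dvd 2" by (simp add: mod_eq_dvd_iff_nat)
    then show False using assms(2) by (auto dest: dvd_imp_le)
  qed
  moreover have "(2 + t) mod length C < length C" by (rule mod_less_divisor) (use t(1) in linarith)
  ultimately have "C ! ((2 + t) mod length C) \<noteq> C ! t"
    using nth_eq_iff_index_eq[OF assms(1)] t(1) by (metis mod_less)
  then show ?thesis
    using cycle_of_list_funpow_nth[OF assms(1) t(1), of 2] t(2) by (simp add: numeral_2_eq_2)
qed

lemma cycle_of_list_neq_inv: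
  assumes "distinct C" "3 \<le> length C"
  shows "cycle_of_list C \<noteq> perm_inv (cycle_of_list C)"
proof
  assume eq: "cycle_of_list C = perm_inv (cycle_of_list C)"
  have "cycle_of_list C (perm_inv (cycle_of_list C) v) = v" for v
    by (rule permutes_inverses(1)[OF cycle_permutes])
  then have "cycle_of_list C (cycle_of_list C (C ! 0)) = C ! 0" by (subst (2) eq)
  moreover have "C ! 0 \<in> set C" using assms(2) by (intro nth_mem) linarith
  ultimately show False using cycle_of_list_twice_neq[OF assms] by blast
qed

lemma perm_weight_cycle_of_list:
  assumes "distinct C" "2 \<le> length C"
  shows "perm_weight a (cycle_of_list C) = cycle_gain a C"
  unfolding perm_weight_def cycle_gain_def moved_cycle_of_list[OF assms]
  by (rule prod_cycle_of_list[OF assms(1)])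

lemma set_support: "permutation p \<Longrightarrow> set (support p i) = orbit p i"
  using support_set[of p i] by (simp add: orbit_altdef_permutation full_SetCompr_eq)

lemma length_support: "permutation p \<Longrightarrow> length (support p i) = card (orbit p i)"
  by (metis distinct_card cycle_of_permutation set_support)

lemma cycle_of_list_support:
  assumes "permutation p" "moved p \<subseteq> orbit p i"
  shows "cycle_of_list (support p i) = p"
proof
  fix v
  show "cycle_of_list (support p i) v = p v"
  proof (cases "v \<in> orbit p i")
    case True
    then show ?thesis using cycle_restrict[OF assms(1)] set_support[OF assms(1)] by metis
  next
    case False
    then have "p v = v" using assms(2) unfolding moved_def by blast
    then show ?thesis
      using False id_outside_supp[of v "support p i"] set_support[OF assms(1)] by simp
  qed
qed

lemma cycle_gain_support:
  assumes "permutation p"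
  shows "cycle_gain a (support p i) = orbit_weight a p i"
proof -
  have "cycle_gain a (support p i) = (\<Prod>j\<in>set (support p i). a j (cycle_of_list (support p i) j))"
    unfolding cycle_gain_def by (rule prod_cycle_of_list[OF cycle_of_permutation[OF assms], symmetric])
  also have "\<dots> = orbit_weight a p i"
    unfolding orbit_weight_def set_support[OF assms]
    using cycle_restrict[OF assms] set_support[OF assms] by (intro prod.cong) auto
  finally show ?thesis .
qed

lemma is_cycle_support:
  assumes p: "p permutes {0..<n}" and i: "i < n"
    and edges: "\<forall>j\<in>orbit p i. E j (p j)" and card: "3 \<le> card (orbit p i)"
  shows "is_cycle n E (support p i)"
proof -
  have perm: "permutation p" using permutes_imp_permutation[OF finite_atLeastLessThan p] .
  let ?L = "support p i"
  have next_eq: "?L ! ((t + 1) mod length ?L) = p (?L ! t)" if "t < length ?L" for t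
    using cycle_of_list_nth[OF cycle_of_permutation[OF perm] that]
      cycle_restrict[OF perm nth_mem[OF that]] by simp
  have "?L ! t \<in> orbit p i" if "t < length ?L" for t
    using nth_mem[OF that] set_support[OF perm] by simp
  then show ?thesis
    unfolding is_cycle_def
    using length_support[OF perm] card cycle_of_permutation[OF perm] set_support[OF perm]
      permutes_orbit_subset[OF p] i edges next_eq by auto
qed

lemma cycle_edges_conv:
  assumes "distinct C"
  shows "cycle_edges C = (\<lambda>v. {v, cycle_of_list C v}) ` set C"
  unfolding cycle_edges_def set_conv_nth_image using cycle_of_list_nth[OF assms] by auto

lemma Union_cycle_edges: "distinct C \<Longrightarrow> \<Union> (cycle_edges C) = set C"
  using permutes_in_image[OF cycle_permutes[of C]] by (auto simp: cycle_edges_conv)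

lemma cycle_of_list_eq_or_inv:
  assumes C: "distinct C" "3 \<le> length C" and D: "distinct D" "3 \<le> length D"
    and edges: "cycle_edges D = cycle_edges C"
  shows "cycle_of_list D = cycle_of_list C \<or> cycle_of_list D = perm_inv (cycle_of_list C)"
proof -
  let ?s = "cycle_of_list C" and ?p = "cycle_of_list D"
  have s: "?s permutes set C" by (rule cycle_permutes)
  have same_set: "set D = set C"
    using Union_cycle_edges[OF C(1)] Union_cycle_edges[OF D(1)] edges by simp
  have step: "?p v = ?s v \<or> ?p v = perm_inv ?s v" if v: "v \<in> set C" for v
  proof -
    have "{v, ?p v} \<in> cycle_edges C"
      using edges v same_set by (auto simp: cycle_edges_conv[OF D(1)])
    then obtain u where u: "u \<in> set C" "{v, ?p v} = {u, ?s u}"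
      by (auto simp: cycle_edges_conv[OF C(1)])
    then have "v = u \<and> ?p v = ?s u \<or> v = ?s u \<and> ?p v = u" by (auto simp: doubleton_eq_iff)
    then show ?thesis using permutes_inverses(2)[OF s, of u] by auto
  qed
  have outside: "?p v = v" "?s v = v" "perm_inv ?s v = v" if "v \<notin> set C" for v
    using that same_set id_outside_supp[of v D] id_outside_supp[of v C]
      permutes_not_in[OF permutes_inv[OF s]] by simp_all
  show ?thesis
  proof (cases "\<exists>x\<in>set C. ?p x = ?s x")
    case True
    then obtain x where x: "x \<in> set C" "?p x = ?s x" by blast
    have "orbit ?s x \<subseteq> {v \<in> set C. ?p v = ?s v}"
    proof (rule orbit_subset_invariant)
      fix v assume "v \<in> {v \<in> set C. ?p v = ?s v}"
      then have v: "v \<in> set C" "?p v = ?s v" by auto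
      have sv: "?s v \<in> set C" using v(1) permutes_in_image[OF s] by simp
      have "?p (?s v) \<noteq> v" using cycle_of_list_twice_neq[OF D, of v] v same_set by simp
      then show "?s v \<in> {v \<in> set C. ?p v = ?s v}"
        using step[OF sv] sv permutes_inverses(2)[OF s, of v] by auto
    qed (use x in simp)
    then have "?p v = ?s v" for v
      using orbit_cycle_of_list[OF C(1) x(1)] outside by (cases "v \<in> set C") auto
    then show ?thesis by auto
  next
    case False
    then have "?p v = perm_inv ?s v" for v
      using step outside by (cases "v \<in> set C") auto
    then show ?thesis by auto
  qed
qed

lemma unit_eq_or_cnj_if_Re_eq:
  assumes "cmod z = 1" "cmod w = 1" "Re z = Re w"
  shows "z = w \<or> z = cnj w"
proof -
  have "(Re z)\<^sup>2 + (Im z)\<^sup>2 = 1" "(Re w)\<^sup>2 + (Im w)\<^sup>2 = 1"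
    using assms(1,2) unfolding cmod_def by auto
  then have "(Im z)\<^sup>2 = (Im w)\<^sup>2" using assms(3) by simp
  then have "Im z = Im w \<or> Im z = - Im w" by (simp add: power2_eq_iff)
  then show ?thesis using assms(3) by (auto simp: complex_eq_iff)
qed

definition gain_kernel ::
  "(nat \<Rightarrow> nat \<Rightarrow> bool) \<Rightarrow> (nat \<Rightarrow> nat \<Rightarrow> complex) \<Rightarrow> nat \<Rightarrow> nat \<Rightarrow> complex" where
  "gain_kernel E \<phi> s t = (if E s t then \<phi> s t else 0)"

lemma gain_adj_eq_mat: "gain_adj n E \<phi> = mat n n (\<lambda>(s, t). gain_kernel E \<phi> s t)"
  unfolding gain_adj_def gain_kernel_def ..

lemma T_gain_cnj: "T_gain E \<phi> \<Longrightarrow> E s t \<Longrightarrow> \<phi> t s = cnj (\<phi> s t)"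
  unfolding T_gain_def using complex_div_cnj[of 1 "\<phi> s t"] by (simp add: inverse_eq_divide)

lemma simple_graph_sym: "simple_graph n E \<Longrightarrow> E s t \<Longrightarrow> E t s"
  unfolding simple_graph_def by blast

lemma hermitian_gain_kernel:
  assumes "simple_graph n E" "T_gain E \<phi>"
  shows "hermitian_kernel (gain_kernel E \<phi>)"
  unfolding hermitian_kernel_def gain_kernel_def
proof (intro allI)
  fix s t
  have "E t s \<longleftrightarrow> E s t" using simple_graph_sym[OF assms(1)] by blast
  then show "cnj (if E s t then \<phi> s t else 0) = (if E t s then \<phi> t s else 0)"
    using T_gain_cnj[OF assms(2), of s t] by simp
qed

lemma gain_kernel_diag: "simple_graph n E \<Longrightarrow> gain_kernel E \<phi> i i = 0"
  unfolding simple_graph_def gain_kernel_def by (cases "E i i") auto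

lemma char_poly_gain_adj_eq_iff:
  assumes "simple_graph n E"
  shows "char_poly (gain_adj n E \<phi>1) = char_poly (gain_adj n E \<phi>2) \<longleftrightarrow>
    (\<forall>k\<le>n. (\<Sum>p\<in>perms_moving n k. of_int (sign p) * perm_weight (gain_kernel E \<phi>1) p) =
      (\<Sum>p\<in>perms_moving n k. of_int (sign p) * perm_weight (gain_kernel E \<phi>2) p))"
  (is "_ \<longleftrightarrow> (\<forall>k\<le>n. ?sum \<phi>1 k = ?sum \<phi>2 k)")
proof -
  have coeff: "coeff (char_poly (gain_adj n E \<phi>)) (n - k) = (-1) ^ k * ?sum \<phi> k"
    if "k \<le> n" for \<phi> k
    unfolding gain_adj_eq_mat by (rule coeff_char_poly_zero_diag[OF gain_kernel_diag[OF assms] that])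
  show ?thesis
  proof
    assume "char_poly (gain_adj n E \<phi>1) = char_poly (gain_adj n E \<phi>2)"
    then have "(-1) ^ k * ?sum \<phi>1 k = (-1) ^ k * ?sum \<phi>2 k" if "k \<le> n" for k
      using coeff[OF that] by metis
    then show "\<forall>k\<le>n. ?sum \<phi>1 k = ?sum \<phi>2 k" by simp
  next
    assume "\<forall>k\<le>n. ?sum \<phi>1 k = ?sum \<phi>2 k"
    then show "char_poly (gain_adj n E \<phi>1) = char_poly (gain_adj n E \<phi>2)"
      using coeff by (intro char_poly_eqI[of _ n]) (simp_all add: gain_adj_def)
  qed
qed

definition along_edges :: "(nat \<Rightarrow> nat \<Rightarrow> bool) \<Rightarrow> (nat \<Rightarrow> nat) \<Rightarrow> bool" where
  "along_edges E p \<longleftrightarrow> (\<forall>j\<in>moved p. E j (p j))"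

lemma along_edges_reverse_on:
  assumes G: "simple_graph n E" and p: "permutation p" "\<And>j. p j \<in> U \<longleftrightarrow> j \<in> U"
    and edges: "along_edges E p"
  shows "along_edges E (reverse_on U p)"
  unfolding along_edges_def moved_reverse_on[OF p]
proof
  fix j assume j: "j \<in> moved p"
  show "E j (reverse_on U p j)"
  proof (cases "j \<in> U")
    case True
    have inv: "p (perm_inv p j) = j"
      using permutation_bijective[OF p(1)] by (simp add: bij_is_surj surj_f_inv_f)
    then have "perm_inv p j \<in> moved p" using j apply_in_moved_iff[OF p(1)] by metis
    then have "E (perm_inv p j) j" using edges inv unfolding along_edges_def by metis
    then show ?thesis using True simple_graph_sym[OF G] by (simp add: reverse_on_def)
  next
    case False
    then show ?thesis using j edges by (simp add: reverse_on_def along_edges_def)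
  qed
qed

lemma along_edges_inv:
  assumes "simple_graph n E" "permutation p" "along_edges E p"
  shows "along_edges E (perm_inv p)"
proof -
  have "reverse_on UNIV p = perm_inv p" by (simp add: reverse_on_def fun_eq_iff)
  then show ?thesis using along_edges_reverse_on[OF assms(1,2), of UNIV] assms(3) by simp
qed

lemma along_edges_switch:
  assumes "simple_graph n E" "permutation p" "along_edges E p"
  shows "along_edges E (switch a b p)"
  unfolding switch_def
  by (rule along_edges_reverse_on[OF assms(1,2) mismatch_invariant[OF assms(2)] assms(3)])

lemma along_edges_cycle_of_list:
  assumes "is_cycle n E C"
  shows "along_edges E (cycle_of_list C)"
  unfolding along_edges_def
proof
  fix j assume "j \<in> moved (cycle_of_list C)"
  then have "j \<in> set C" using id_outside_supp by (fastforce simp: moved_def)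
  then obtain t where "t < length C" "j = C ! t" by (auto simp: in_set_conv_nth)
  then show "E j (cycle_of_list C j)"
    using assms cycle_of_list_nth[of C t] by (simp add: is_cycle_def)
qed

(* The only use of membership in D_n. *)
lemma in_D_cycle_perm_unique:
  assumes D: "in_D n E" and C: "is_cycle n E C"
    and p: "p permutes {0..<n}" "along_edges E p"
    and card: "card (orbit p i) = length C" "card (moved p) = length C"
  shows "p = cycle_of_list C \<or> p = perm_inv (cycle_of_list C)"
proof -
  have perm: "permutation p" using permutes_imp_permutation[OF finite_atLeastLessThan p(1)] .
  have C_facts: "distinct C" "3 \<le> length C" using C by (auto simp: is_cycle_def)
  have "i \<in> moved p"
  proof (rule ccontr)
    assume "i \<notin> moved p"
    then have "orbit p i = {i}" by (simp add: moved_def orbit_eq_singleton_iff)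
    then show False using card(1) C_facts(2) by simp
  qed
  then have "orbit p i \<subseteq> moved p"
    by (rule orbit_subset_invariant[rotated]) (simp add: apply_in_moved_iff[OF perm])
  then have orbit: "orbit p i = moved p"
    using card card_subset_eq[OF finite_moved[OF perm]] by metis
  let ?L = "support p i"
  have "i < n" using \<open>i \<in> moved p\<close> moved_subset[OF p(1)] by auto
  moreover have "\<forall>j\<in>orbit p i. E j (p j)" using p(2) orbit by (simp add: along_edges_def)
  ultimately have L: "is_cycle n E ?L"
    using is_cycle_support[OF p(1)] card(1) C_facts(2) by simp
  moreover have "length ?L = length C" using length_support[OF perm] card(1) by simp
  ultimately have "cycle_edges ?L = cycle_edges C" using D C unfolding in_D_def by blast
  then have "cycle_of_list ?L = cycle_of_list C \<or> cycle_of_list ?L = perm_inv (cycle_of_list C)"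
    using cycle_of_list_eq_or_inv[OF C_facts] L by (simp add: is_cycle_def)
  then show ?thesis using cycle_of_list_support[OF perm] orbit by simp
qed

lemma orbit_weight_gain_kernel:
  "\<forall>j\<in>orbit p i. E j (p j) \<Longrightarrow> orbit_weight (gain_kernel E \<phi>) p i = orbit_weight \<phi> p i"
  unfolding orbit_weight_def gain_kernel_def by (intro prod.cong) auto

lemma cycle_gain_gain_kernel: "is_cycle n E C \<Longrightarrow> cycle_gain (gain_kernel E \<phi>) C = cycle_gain \<phi> C"
  unfolding cycle_gain_def gain_kernel_def by (intro prod.cong) (auto simp: is_cycle_def)

lemma orbit_weight_two_cycle:
  assumes T: "T_gain E \<phi>" and perm: "permutation p" and edge: "E i (p i)"
    and two: "card (orbit p i) = 2"
  shows "orbit_weight \<phi> p i = 1"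
proof -
  have moved: "p i \<noteq> i" using two orbit_eq_singleton_iff[of p i] by force
  have sub: "{i, p i} \<subseteq> orbit p i" by (simp add: permutation_self_in_orbit[OF perm] orbit.base)
  then have orbit: "orbit p i = {i, p i}"
    using card_subset_eq[OF finite_orbit sub] permutation_self_in_orbit[OF perm] two moved by simp
  have "p (p i) \<noteq> p i" using moved bij_is_inj[OF permutation_bijective[OF perm]] by (auto dest: injD)
  moreover have "p (p i) \<in> orbit p i" by (rule orbit.step[OF orbit.base])
  ultimately have swap: "p (p i) = i" using orbit by auto
  have "cmod (\<phi> i (p i)) = 1" using T edge by (simp add: T_gain_def)
  then have "\<phi> i (p i) * cnj (\<phi> i (p i)) = 1" using complex_norm_square[of "\<phi> i (p i)"] by simp
  then show ?thesis
    using moved swap T_gain_cnj[OF T edge] by (simp add: orbit_weight_def orbit)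
qed

lemma cmod_orbit_weight_T_gain:
  assumes "T_gain E \<phi>" "\<forall>j\<in>orbit p i. E j (p j)"
  shows "cmod (orbit_weight \<phi> p i) = 1"
  unfolding orbit_weight_def prod_norm[symmetric] using assms by (intro prod.neutral) (simp add: T_gain_def)

lemma orbit_weights_conj_gain_kernel:
  assumes T: "T_gain E \<phi>1" "T_gain E \<phi>2" and perm: "permutation p"
    and Re: "\<And>i. i \<in> moved p \<Longrightarrow> \<forall>j\<in>orbit p i. E j (p j) \<Longrightarrow> 3 \<le> card (orbit p i) \<Longrightarrow>
      Re (orbit_weight \<phi>1 p i) = Re (orbit_weight \<phi>2 p i)"
  shows "orbit_weights_conj (gain_kernel E \<phi>1) (gain_kernel E \<phi>2) p"
  unfolding orbit_weights_conj_def
proof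
  fix i assume i: "i \<in> moved p"
  show "orbit_weight (gain_kernel E \<phi>2) p i = orbit_weight (gain_kernel E \<phi>1) p i \<or>
      orbit_weight (gain_kernel E \<phi>2) p i = cnj (orbit_weight (gain_kernel E \<phi>1) p i)"
  proof (cases "\<forall>j\<in>orbit p i. E j (p j)")
    case False
    then have "orbit_weight (gain_kernel E \<phi>) p i = 0" for \<phi>
      unfolding orbit_weight_def gain_kernel_def
      using finite_orbit[OF permutation_self_in_orbit[OF perm]] by (auto simp: prod_zero_iff)
    then show ?thesis by simp
  next
    case edges: True
    then have weights: "orbit_weight (gain_kernel E \<phi>) p i = orbit_weight \<phi> p i" for \<phi>
      by (rule orbit_weight_gain_kernel)
    consider "card (orbit p i) = 2" | "3 \<le> card (orbit p i)"
      using two_le_card_orbit[OF perm i] by linarith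
    then show ?thesis
    proof cases
      case 1
      have "E i (p i)" using edges permutation_self_in_orbit[OF perm] by blast
      then show ?thesis using orbit_weight_two_cycle[OF _ perm _ 1] T weights by simp
    next
      case 2
      show ?thesis
        using unit_eq_or_cnj_if_Re_eq[OF cmod_orbit_weight_T_gain[OF T(2) edges]
            cmod_orbit_weight_T_gain[OF T(1) edges] Re[OF i edges 2, symmetric]] weights
        by simp
    qed
  qed
qed

lemma switch_in_perms_moving:
  assumes "p \<in> perms_moving n k"
  shows "switch a b p \<in> perms_moving n k"
proof -
  have p: "p permutes {0..<n}" "card (moved p) = k" using assms(1) by (auto simp: perms_moving_def)
  have perm: "permutation p" using permutes_imp_permutation[OF finite_atLeastLessThan p(1)] .
  show ?thesis
    using switch_permutes[OF perm p(1)] moved_switch[OF perm] p(2)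
    by (simp add: perms_moving_def)
qed

lemma char_poly_gain_adj_eq_if_Re_cycle_gain_eq:
  assumes G: "simple_graph n E" and T: "T_gain E \<phi>1" "T_gain E \<phi>2"
    and Re: "\<And>C. is_cycle n E C \<Longrightarrow> Re (cycle_gain \<phi>1 C) = Re (cycle_gain \<phi>2 C)"
  shows "char_poly (gain_adj n E \<phi>1) = char_poly (gain_adj n E \<phi>2)"
  unfolding char_poly_gain_adj_eq_iff[OF G]
proof (intro allI impI sum_sign_perm_weight_switch[OF hermitian_gain_kernel[OF G T(2)]
      hermitian_gain_kernel[OF G T(1)]])
  fix k p assume "p \<in> perms_moving n k"
  then have p: "p permutes {0..<n}" "card (moved p) = k" by (auto simp: perms_moving_def)
  have perm: "permutation p" using permutes_imp_permutation[OF finite_atLeastLessThan p(1)] .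
  have "orbit_weights_conj (gain_kernel E \<phi>2) (gain_kernel E \<phi>1) p"
  proof (rule orbit_weights_conj_gain_kernel[OF T(2) T(1) perm])
    fix i assume "i \<in> moved p" "\<forall>j\<in>orbit p i. E j (p j)" "3 \<le> card (orbit p i)"
    then have "is_cycle n E (support p i)"
      using is_cycle_support[OF p(1)] moved_subset[OF p(1)] by auto
    then show "Re (orbit_weight \<phi>2 p i) = Re (orbit_weight \<phi>1 p i)"
      using Re cycle_gain_support[OF perm] by metis
  qed
  then show "permutation p \<and> orbit_weights_conj (gain_kernel E \<phi>2) (gain_kernel E \<phi>1) p \<and>
      switch (gain_kernel E \<phi>2) (gain_kernel E \<phi>1) p \<in> perms_moving n k"
    using perm switch_in_perms_moving[OF \<open>p \<in> perms_moving n k\<close>] by simp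
qed

lemma sum_perms_moving_minus_cycle_eq:
  assumes D: "in_D n E" and T: "T_gain E \<phi>1" "T_gain E \<phi>2" and C: "is_cycle n E C"
    and shorter: "\<And>C'. length C' < length C \<Longrightarrow> is_cycle n E C' \<Longrightarrow>
      Re (cycle_gain \<phi>1 C') = Re (cycle_gain \<phi>2 C')"
  shows "(\<Sum>p\<in>perms_moving n (length C) - {cycle_of_list C, perm_inv (cycle_of_list C)}.
      of_int (sign p) * perm_weight (gain_kernel E \<phi>1) p) =
    (\<Sum>p\<in>perms_moving n (length C) - {cycle_of_list C, perm_inv (cycle_of_list C)}.
      of_int (sign p) * perm_weight (gain_kernel E \<phi>2) p)"
proof -
  let ?s = "cycle_of_list C" and ?a = "gain_kernel E \<phi>2" and ?b = "gain_kernel E \<phi>1"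
  have G: "simple_graph n E" using D by (simp add: in_D_def connected_graph_def)
  have H: "hermitian_kernel ?a" "hermitian_kernel ?b" using hermitian_gain_kernel[OF G] T by simp_all
  show ?thesis
  proof (rule sum_sign_perm_weight_switch[OF H])
    fix p assume "p \<in> perms_moving n (length C) - {?s, perm_inv ?s}"
    then have p: "p \<in> perms_moving n (length C)" "p \<notin> {?s, perm_inv ?s}" by auto
    then have pS: "p permutes {0..<n}" and card: "card (moved p) = length C"
      by (auto simp: perms_moving_def)
    have perm: "permutation p" using permutes_imp_permutation[OF finite_atLeastLessThan pS] .
    have not_single: "\<not> (along_edges E p \<and> card (orbit p i) = length C)" for i
      using in_D_cycle_perm_unique[OF D C pS _ _ card] p(2) by blast
    have "orbit_weights_conj ?a ?b p"
    proof (rule orbit_weights_conj_gain_kernel[OF T(2) T(1) perm])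
      fix i assume i: "i \<in> moved p" and edges: "\<forall>j\<in>orbit p i. E j (p j)"
        and three: "3 \<le> card (orbit p i)"
      have sub: "orbit p i \<subseteq> moved p"
        by (rule orbit_subset_invariant[OF _ i]) (simp add: apply_in_moved_iff[OF perm])
      have "card (orbit p i) \<noteq> length C"
      proof
        assume eq: "card (orbit p i) = length C"
        then have "orbit p i = moved p" using card_subset_eq[OF finite_moved[OF perm] sub] card by simp
        then have "along_edges E p" using edges by (simp add: along_edges_def)
        then show False using not_single eq by blast
      qed
      then have shorter_orbit: "length (support p i) < length C"
        using card_mono[OF finite_moved[OF perm] sub] card length_support[OF perm] by simp
      have "i < n" using i moved_subset[OF pS] by auto
      then have "is_cycle n E (support p i)" using is_cycle_support[of p n i E] pS edges three by blast
      with shorter_orbit show "Re (orbit_weight \<phi>2 p i) = Re (orbit_weight \<phi>1 p i)"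
        using shorter cycle_gain_support[OF perm] by metis
    qed
    \<comment> \<open>Otherwise p, being the switch of its switch, would run along edges with an orbit of length k.\<close>
    moreover have "switch ?a ?b p \<notin> {?s, perm_inv ?s}"
    proof
      let ?q = "switch ?a ?b p"
      assume q: "?q \<in> {?s, perm_inv ?s}"
      have perm_q: "permutation ?q" using q permutation_of_cycle[of C] permutation_inverse[OF permutation_of_cycle[of C]] by auto
      have "along_edges E ?q"
        using q along_edges_cycle_of_list[OF C] along_edges_inv[OF G permutation_of_cycle] by auto
      then have "along_edges E p"
        using along_edges_switch[OF G perm_q] switch_switch[OF perm H] by metis
      moreover have "card (orbit p (C ! 0)) = length C"
      proof -
        have C_facts: "distinct C" "C ! 0 \<in> set C"
          using C by (auto simp: is_cycle_def intro!: nth_mem)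
        have "orbit ?q (C ! 0) = set C"
          using q by (auto simp: orbit_cycle_of_list[OF C_facts] orbit_inv_eq[OF permutation_of_cycle])
        then show ?thesis using orbit_switch[OF perm] distinct_card[OF C_facts(1)] by simp
      qed
      ultimately show False using not_single by blast
    qed
    ultimately show "permutation p \<and> orbit_weights_conj ?a ?b p \<and>
        switch ?a ?b p \<in> perms_moving n (length C) - {?s, perm_inv ?s}"
      using perm switch_in_perms_moving[OF p(1)] by simp
  qed
qed

lemma Re_cycle_gain_eq_if_char_poly_eq:
  assumes D: "in_D n E" and T: "T_gain E \<phi>1" "T_gain E \<phi>2"
    and eq: "char_poly (gain_adj n E \<phi>1) = char_poly (gain_adj n E \<phi>2)"
  shows "is_cycle n E C \<Longrightarrow> Re (cycle_gain \<phi>1 C) = Re (cycle_gain \<phi>2 C)"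
proof (induction "length C" arbitrary: C rule: less_induct)
  case less
  let ?s = "cycle_of_list C" and ?Q = "perms_moving n (length C)"
  let ?S = "{cycle_of_list C, perm_inv (cycle_of_list C)}"
  let ?f = "\<lambda>\<phi> p. of_int (sign p) * perm_weight (gain_kernel E \<phi>) p"
  have G: "simple_graph n E" using D by (simp add: in_D_def connected_graph_def)
  have C: "distinct C" "3 \<le> length C" "set C \<subseteq> {0..<n}" using less.prems by (auto simp: is_cycle_def)
  have s: "?s permutes {0..<n}" using permutes_subset[OF cycle_permutes C(3)] .
  have S_sub: "?S \<subseteq> ?Q"
    using s permutes_inv[OF s] C(2)
    by (auto simp: perms_moving_def moved_inv[OF permutation_of_cycle]
        moved_cycle_of_list[OF C(1)] distinct_card[OF C(1)])
  have fin: "finite ?Q" unfolding perms_moving_def by (rule finite_subset[OF _ finite_permutations]) auto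
  have pair: "(\<Sum>p\<in>?S. ?f \<phi> p) = of_int (sign ?s) * of_real (2 * Re (cycle_gain \<phi> C))"
    if "T_gain E \<phi>" for \<phi>
  proof -
    have "(\<Sum>p\<in>?S. ?f \<phi> p) = ?f \<phi> ?s + ?f \<phi> (perm_inv ?s)"
      using cycle_of_list_neq_inv[OF C(1,2)] by simp
    also have "\<dots> = of_int (sign ?s) * of_real (2 * Re (perm_weight (gain_kernel E \<phi>) ?s))"
      by (rule sign_perm_weight_add_inv[OF permutation_of_cycle hermitian_gain_kernel[OF G that]])
    also have "perm_weight (gain_kernel E \<phi>) ?s = cycle_gain \<phi> C"
      using perm_weight_cycle_of_list[OF C(1)] C(2) cycle_gain_gain_kernel[OF less.prems] by simp
    finally show ?thesis .
  qed
  have "length C \<le> n" using card_mono[OF _ C(3)] distinct_card[OF C(1)] by simp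
  then have "(\<Sum>p\<in>?Q. ?f \<phi>1 p) = (\<Sum>p\<in>?Q. ?f \<phi>2 p)"
    using eq char_poly_gain_adj_eq_iff[OF G] by blast
  then have "(\<Sum>p\<in>?Q - ?S. ?f \<phi>1 p) + (\<Sum>p\<in>?S. ?f \<phi>1 p) =
      (\<Sum>p\<in>?Q - ?S. ?f \<phi>2 p) + (\<Sum>p\<in>?S. ?f \<phi>2 p)"
    by (simp add: sum.subset_diff[OF S_sub fin])
  then have "(\<Sum>p\<in>?S. ?f \<phi>1 p) = (\<Sum>p\<in>?S. ?f \<phi>2 p)"
    using sum_perms_moving_minus_cycle_eq[OF D T less.prems less.hyps] by simp
  then show ?case using pair T by simp
qed

theorem theorem3p5:
  fixes n :: nat and E :: "nat \<Rightarrow> nat \<Rightarrow> bool" and \<phi>1 \<phi>2 :: "nat \<Rightarrow> nat \<Rightarrow> complex"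
  assumes "in_D n E" and "T_gain E \<phi>1" and "T_gain E \<phi>2"
  shows "spec (gain_adj n E \<phi>1) = spec (gain_adj n E \<phi>2) \<longleftrightarrow>
    (\<forall>C. is_cycle n E C \<longrightarrow> Re (cycle_gain \<phi>1 C) = Re (cycle_gain \<phi>2 C))"
proof -
  have G: "simple_graph n E" using assms(1) by (simp add: in_D_def connected_graph_def)
  have carrier: "gain_adj n E \<phi> \<in> carrier_mat n n" for \<phi> by (simp add: gain_adj_def)
  show ?thesis
    unfolding spec_eq_iff_char_poly_eq[OF carrier carrier]
    using Re_cycle_gain_eq_if_char_poly_eq[OF assms] char_poly_gain_adj_eq_if_Re_cycle_gain_eq[OF G assms(2,3)]
    by blast
qed

end
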